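(* Let $1<S\le N$, $L$ a band-width vector, $\dot W$ an $L$-admissible matrix, $W_\varepsilon=\mathrm{Id}+\varepsilon\dot W$, $k\in\mathbb N$, $\beta\in\Gamma$, $D_\beta=D_{k,\beta,L}$, $P_{\varepsilon,\beta}=D_\beta W_\varepsilon$. Fix $\ell\in\{1,\dots,N\}$ and $s_\ell$ with $\ell\in B_{s_\ell}$. Suppose that for $0<\varepsilon<\gamma$, $f^{(\ell)}_\varepsilon$ is a unit-norm eigenvector of $P_{\varepsilon,\beta}$ with eigenvalue $\lambda^{(\ell)}_\varepsilon$, that $\lambda^{(\ell)}_\varepsilon\to e^{-2\pi ik\beta_{s_\ell}}$, and that $f^{(\ell)}_\varepsilon\to f^{(\ell)}$ as $\varepsilon\to0$, where $f^{(\ell)}$ is a unit eigenvector of $\hat P_\beta=D_\beta\hat W_L$. Then for every $j\in\{1,\dots,N\}\setminus B_{s_\ell}$, with $s_j$ such that $j\in B_{s_j}$, $$\lim_{\varepsilon\to0}\frac{(f^{(\ell)}_\varepsilon)_j-(f^{(\ell)})_j}{\varepsilon}=\lim_{\varepsilon\to0}\frac{(f^{(\ell)}_\varepsilon)_j}{\varepsilon}=\frac{1}{e^{-2\pi ik\beta_{s_\ell}}-e^{-2\pi ik\beta_{s_j}}}\bigl(D_\beta\dot Wf^{(\ell)}\bigr)_j.$$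
   Context: A band-width vector is $L=(L_1,\dots,L_S)$ of positive integers with $\sum_sL_s=N$; $N_0=0$, $N_s=N_{s-1}+L_s$, $B_s=\{j:N_{s-1}<j\le N_s\}$. $D_{k,\beta,L}$ is the diagonal matrix with $j$-th entry $e^{-2\pi ik\beta_s}$ for $j\in B_s$. $\dot W$ is $L$-admissible if it is real symmetric and (1) $\dot W_{ij}\ge0$ for $i\ne j$, $\sum_j\dot W_{ij}=0$ for all $i$; (2) $\dot W$ has $N$ distinct eigenvalues; (3) each $\hat W_s=(\dot W_{jk})_{j,k\in B_s}$ has $L_s$ distinct eigenvalues. $\hat W_L$ is block diagonal with blocks $\hat W_1,\dots,\hat W_S$. $\Gamma=\{\beta\in\mathbb R^S: e^{-2\pi ik\beta_{s_1}}\neq e^{-2\pi ik\beta_{s_2}}\text{ for all }k\ne0,\ s_1\ne s_2\}$. For $v\in\mathbb C^N$, $(v)_j$ is its $j$-th entry. *)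

theory Defs
  imports "HOL-Analysis.Analysis"
begin

text \<open>Vectors in C^N are functions nat => complex, matrices are nat => nat => _,
  with indices ranging over {1..N} (entries outside are irrelevant).\<close>

definition bw_vector :: "nat \<Rightarrow> nat \<Rightarrow> (nat \<Rightarrow> nat) \<Rightarrow> bool" where
  "bw_vector S N L \<longleftrightarrow> (\<forall>s\<in>{1..S}. 0 < L s) \<and> (\<Sum>s=1..S. L s) = N"

definition Nacc :: "(nat \<Rightarrow> nat) \<Rightarrow> nat \<Rightarrow> nat" where
  "Nacc L s = (\<Sum>t=1..s. L t)"

definition block :: "(nat \<Rightarrow> nat) \<Rightarrow> nat \<Rightarrow> nat set" where
  "block L s = {j. Nacc L (s - 1) < j \<and> j \<le> Nacc L s}"

definition phase :: "nat \<Rightarrow> (nat \<Rightarrow> real) \<Rightarrow> nat \<Rightarrow> complex" where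
  "phase k \<beta> s = exp (- (2 * of_real pi * \<i> * of_nat k * of_real (\<beta> s)))"

definition Dmat :: "nat \<Rightarrow> nat \<Rightarrow> (nat \<Rightarrow> real) \<Rightarrow> (nat \<Rightarrow> nat) \<Rightarrow> nat \<Rightarrow> nat \<Rightarrow> complex" where
  "Dmat S k \<beta> L i j =
     (if i = j then (\<Sum>s=1..S. if j \<in> block L s then phase k \<beta> s else 0) else 0)"

definition mmul :: "nat \<Rightarrow> (nat \<Rightarrow> nat \<Rightarrow> complex) \<Rightarrow> (nat \<Rightarrow> nat \<Rightarrow> complex) \<Rightarrow> nat \<Rightarrow> nat \<Rightarrow> complex" where
  "mmul N A B i j = (\<Sum>l=1..N. A i l * B l j)"

definition mvec :: "nat \<Rightarrow> (nat \<Rightarrow> nat \<Rightarrow> complex) \<Rightarrow> (nat \<Rightarrow> complex) \<Rightarrow> nat \<Rightarrow> complex" where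
  "mvec N A v i = (\<Sum>j=1..N. A i j * v j)"

definition vnorm :: "nat \<Rightarrow> (nat \<Rightarrow> complex) \<Rightarrow> real" where
  "vnorm N v = sqrt (\<Sum>j=1..N. (cmod (v j))\<^sup>2)"

definition eigvals_on :: "nat set \<Rightarrow> (nat \<Rightarrow> nat \<Rightarrow> complex) \<Rightarrow> complex set" where
  "eigvals_on I A = {\<mu>. \<exists>v. (\<exists>i\<in>I. v i \<noteq> 0) \<and> (\<forall>i\<in>I. (\<Sum>j\<in>I. A i j * v j) = \<mu> * v i)}"

definition cmat :: "(nat \<Rightarrow> nat \<Rightarrow> real) \<Rightarrow> nat \<Rightarrow> nat \<Rightarrow> complex" where
  "cmat W i j = complex_of_real (W i j)"

definition admissible :: "nat \<Rightarrow> nat \<Rightarrow> (nat \<Rightarrow> nat) \<Rightarrow> (nat \<Rightarrow> nat \<Rightarrow> real) \<Rightarrow> bool" where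
  "admissible S N L W \<longleftrightarrow>
     (\<forall>i\<in>{1..N}. \<forall>j\<in>{1..N}. W i j = W j i) \<and>
     (\<forall>i\<in>{1..N}. \<forall>j\<in>{1..N}. i \<noteq> j \<longrightarrow> 0 \<le> W i j) \<and>
     (\<forall>i\<in>{1..N}. (\<Sum>j=1..N. W i j) = 0) \<and>
     card (eigvals_on {1..N} (cmat W)) = N \<and>
     (\<forall>s\<in>{1..S}. card (eigvals_on (block L s) (cmat W)) = L s)"

definition What :: "nat \<Rightarrow> (nat \<Rightarrow> nat) \<Rightarrow> (nat \<Rightarrow> nat \<Rightarrow> real) \<Rightarrow> nat \<Rightarrow> nat \<Rightarrow> real" where
  "What S L W i j = (if \<exists>s\<in>{1..S}. i \<in> block L s \<and> j \<in> block L s then W i j else 0)"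

definition Gamma :: "nat \<Rightarrow> (nat \<Rightarrow> real) set" where
  "Gamma S = {\<beta>. \<forall>k::int. \<forall>s1\<in>{1..S}. \<forall>s2\<in>{1..S}. k \<noteq> 0 \<and> s1 \<noteq> s2 \<longrightarrow>
      exp (- (2 * of_real pi * \<i> * of_int k * of_real (\<beta> s1)))
      \<noteq> exp (- (2 * of_real pi * \<i> * of_int k * of_real (\<beta> s2)))}"

definition Weps :: "(nat \<Rightarrow> nat \<Rightarrow> real) \<Rightarrow> real \<Rightarrow> nat \<Rightarrow> nat \<Rightarrow> complex" where
  "Weps W \<epsilon> i j = (if i = j then 1 else 0) + of_real \<epsilon> * of_real (W i j)"

definition Pmat :: "nat \<Rightarrow> nat \<Rightarrow> nat \<Rightarrow> (nat \<Rightarrow> real) \<Rightarrow> (nat \<Rightarrow> nat) \<Rightarrow> (nat \<Rightarrow> nat \<Rightarrow> real) \<Rightarrow> real \<Rightarrow> nat \<Rightarrow> nat \<Rightarrow> complex" where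
  "Pmat N S k \<beta> L W \<epsilon> = mmul N (Dmat S k \<beta> L) (Weps W \<epsilon>)"

definition Phat :: "nat \<Rightarrow> nat \<Rightarrow> nat \<Rightarrow> (nat \<Rightarrow> real) \<Rightarrow> (nat \<Rightarrow> nat) \<Rightarrow> (nat \<Rightarrow> nat \<Rightarrow> real) \<Rightarrow> nat \<Rightarrow> nat \<Rightarrow> complex" where
  "Phat N S k \<beta> L W = mmul N (Dmat S k \<beta> L) (cmat (What S L W))"

end

theory Submission
  imports Defs
begin

text \<open>Row j of the eigenvalue equation for P = D (Id + \<epsilon> W) reads
  d (f_j + \<epsilon> (W f)_j) = \<lambda> f_j, where d is the phase of the block containing j, i.e.
  f_j (\<lambda> - d) = \<epsilon> d (W f)_j. The eigenvalue \<lambda> tends to the phase of the block of l, which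
  differs from d because \<beta> \<in> \<Gamma>, so dividing by \<epsilon> (\<lambda> - d) gives the limit of f_j / \<epsilon>.
  In particular f_j tends to 0, so the limit vector vanishes at j and both quotients agree.\<close>

lemma Nacc_mono: "a \<le> b \<Longrightarrow> Nacc L a \<le> Nacc L b"
  unfolding Nacc_def by (intro sum_mono2) auto

lemma block_unique:
  assumes "j \<in> block L s" "j \<in> block L t" "1 \<le> s" "1 \<le> t"
  shows "s = t"
proof (rule ccontr)
  assume "s \<noteq> t"
  then consider "s < t" | "t < s" by linarith
  then show False
  proof cases
    case 1
    then have "Nacc L s \<le> Nacc L (t - 1)" by (intro Nacc_mono) auto
    then show False using assms unfolding block_def by auto
  next
    case 2
    then have "Nacc L t \<le> Nacc L (s - 1)" by (intro Nacc_mono) auto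
    then show False using assms unfolding block_def by auto
  qed
qed

lemma Dmat_diag_block:
  assumes "j \<in> block L s" "s \<in> {1..S}"
  shows "Dmat S k \<beta> L j j = phase k \<beta> s"
proof -
  have "Dmat S k \<beta> L j j = (\<Sum>t=1..S. if t = s then phase k \<beta> s else 0)"
    unfolding Dmat_def if_P[OF refl]
  proof (rule sum.cong[OF refl])
    fix t assume "t \<in> {1..S}"
    then have "j \<in> block L t \<longleftrightarrow> t = s"
      using assms block_unique[of j L s t] by auto
    then show "(if j \<in> block L t then phase k \<beta> t else 0) = (if t = s then phase k \<beta> s else 0)"
      by simp
  qed
  also have "\<dots> = phase k \<beta> s" using assms by simp
  finally show ?thesis .
qed

lemma phase_neq_if_Gamma:
  assumes "\<beta> \<in> Gamma S" "0 < k" "s1 \<in> {1..S}" "s2 \<in> {1..S}" "s1 \<noteq> s2"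
  shows "phase k \<beta> s1 \<noteq> phase k \<beta> s2"
proof -
  have "of_int (int k) = (of_nat k :: complex)" by simp
  then show ?thesis
    using assms unfolding Gamma_def phase_def mem_Collect_eq
    by (metis of_nat_0_less_iff less_irrefl)
qed

lemma mvec_mmul_diagonal:
  assumes "\<And>i l. i \<noteq> l \<Longrightarrow> D i l = 0" "j \<in> {1..N}"
  shows "mvec N (mmul N D B) v j = D j j * mvec N B v j"
proof -
  have "mmul N D B j i = (\<Sum>l=1..N. if l = j then D j j * B j i else 0)" for i
    unfolding mmul_def using assms(1) by (intro sum.cong) auto
  then have "mmul N D B j i = D j j * B j i" for i
    using assms(2) by simp
  then show ?thesis by (simp add: mvec_def sum_distrib_left mult.assoc)
qed

lemma mvec_Weps:
  assumes "j \<in> {1..N}"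
  shows "mvec N (Weps W \<epsilon>) v j = v j + of_real \<epsilon> * mvec N (cmat W) v j"
proof -
  have "mvec N (Weps W \<epsilon>) v j
      = (\<Sum>i=1..N. (if i = j then v j else 0) + of_real \<epsilon> * (cmat W j i * v i))"
    unfolding mvec_def Weps_def cmat_def by (intro sum.cong) (auto simp: algebra_simps)
  also have "\<dots> = v j + of_real \<epsilon> * mvec N (cmat W) v j"
    using assms by (simp add: mvec_def sum.distrib sum_distrib_left)
  finally show ?thesis .
qed

lemma mvec_Dmat_mmul:
  assumes "j \<in> {1..N}" "j \<in> block L s" "s \<in> {1..S}"
  shows "mvec N (mmul N (Dmat S k \<beta> L) B) v j = phase k \<beta> s * mvec N B v j"
  using assms by (subst mvec_mmul_diagonal) (auto simp: Dmat_def Dmat_diag_block[symmetric])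

lemma mvec_Pmat:
  assumes "j \<in> {1..N}" "j \<in> block L s" "s \<in> {1..S}"
  shows "mvec N (Pmat N S k \<beta> L W \<epsilon>) v j = phase k \<beta> s * (v j + of_real \<epsilon> * mvec N (cmat W) v j)"
  unfolding Pmat_def using assms by (simp add: mvec_Dmat_mmul mvec_Weps)

lemma tendsto_mvec:
  assumes "\<And>i. i \<in> {1..N} \<Longrightarrow> ((\<lambda>x. v x i) \<longlongrightarrow> w i) F"
  shows "((\<lambda>x. mvec N A (v x) j) \<longlongrightarrow> mvec N A w j) F"
  unfolding mvec_def using assms by (intro tendsto_intros)

lemma tendsto_zero_if_tendsto_divide_ident:
  fixes x :: "real \<Rightarrow> 'a::real_normed_field"
  assumes "((\<lambda>\<epsilon>. x \<epsilon> / of_real \<epsilon>) \<longlongrightarrow> c) (at_right 0)"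
  shows "(x \<longlongrightarrow> 0) (at_right 0)"
proof -
  have "((\<lambda>\<epsilon>. of_real \<epsilon> * (x \<epsilon> / of_real \<epsilon>)) \<longlongrightarrow> of_real 0 * c) (at_right 0)"
    by (intro tendsto_intros assms)
  then have "((\<lambda>\<epsilon>. of_real \<epsilon> * (x \<epsilon> / of_real \<epsilon>)) \<longlongrightarrow> 0) (at_right 0)"
    by simp
  moreover have "\<forall>\<^sub>F \<epsilon> in at_right 0. of_real \<epsilon> * (x \<epsilon> / of_real \<epsilon>) = x \<epsilon>"
    using eventually_at_right_less[of 0] by eventually_elim simp
  ultimately show ?thesis by (rule Lim_transform_eventually)
qed

lemma perturbed_eigen_row_limit:
  fixes x w lam :: "real \<Rightarrow> 'a::real_normed_field"
  assumes row: "\<forall>\<^sub>F \<epsilon> in at_right 0. d * (x \<epsilon> + of_real \<epsilon> * w \<epsilon>) = lam \<epsilon> * x \<epsilon>"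
    and lam: "(lam \<longlongrightarrow> p) (at_right 0)" and "p \<noteq> d"
    and w: "(w \<longlongrightarrow> w0) (at_right 0)"
  shows "((\<lambda>\<epsilon>. x \<epsilon> / of_real \<epsilon>) \<longlongrightarrow> d * w0 / (p - d)) (at_right 0)"
proof -
  have "((\<lambda>\<epsilon>. d * w \<epsilon> / (lam \<epsilon> - d)) \<longlongrightarrow> d * w0 / (p - d)) (at_right 0)"
    using \<open>p \<noteq> d\<close> by (intro tendsto_intros lam w) simp
  moreover have "\<forall>\<^sub>F \<epsilon> in at_right 0. lam \<epsilon> \<noteq> d"
    using lam \<open>p \<noteq> d\<close> by (rule tendsto_imp_eventually_ne)
  with row eventually_at_right_less
  have "\<forall>\<^sub>F \<epsilon> in at_right 0. d * w \<epsilon> / (lam \<epsilon> - d) = x \<epsilon> / of_real \<epsilon>"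
  proof eventually_elim
    case (elim \<epsilon>)
    then have "x \<epsilon> * (lam \<epsilon> - d) = of_real \<epsilon> * (d * w \<epsilon>)"
      by (simp add: algebra_simps)
    with elim show ?case by (simp add: field_simps)
  qed
  ultimately show ?thesis by (rule Lim_transform_eventually)
qed

theorem proposition4p7:
  fixes N S k l sl j sj :: nat and L :: "nat \<Rightarrow> nat" and Wd :: "nat \<Rightarrow> nat \<Rightarrow> real"
    and \<beta> :: "nat \<Rightarrow> real" and \<gamma> :: real
    and fe :: "real \<Rightarrow> nat \<Rightarrow> complex" and lam :: "real \<Rightarrow> complex" and f :: "nat \<Rightarrow> complex"
  assumes "1 < S" and "S \<le> N"
    and "bw_vector S N L"
    and "admissible S N L Wd"
    and "0 < k"
    and "\<beta> \<in> Gamma S"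
    and "l \<in> {1..N}" and "sl \<in> {1..S}" and "l \<in> block L sl"
    and "0 < \<gamma>"
    and "\<forall>\<epsilon>. 0 < \<epsilon> \<and> \<epsilon> < \<gamma> \<longrightarrow> vnorm N (fe \<epsilon>) = 1 \<and>
           (\<forall>i\<in>{1..N}. mvec N (Pmat N S k \<beta> L Wd \<epsilon>) (fe \<epsilon>) i = lam \<epsilon> * fe \<epsilon> i)"
    and "(lam \<longlongrightarrow> phase k \<beta> sl) (at_right 0)"
    and "\<forall>i\<in>{1..N}. ((\<lambda>\<epsilon>. fe \<epsilon> i) \<longlongrightarrow> f i) (at_right 0)"
    and "vnorm N f = 1"
    and "\<exists>\<mu>. \<forall>i\<in>{1..N}. mvec N (Phat N S k \<beta> L Wd) f i = \<mu> * f i"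
    and "j \<in> {1..N}" and "j \<notin> block L sl" and "sj \<in> {1..S}" and "j \<in> block L sj"
  shows "((\<lambda>\<epsilon>. (fe \<epsilon> j - f j) / of_real \<epsilon>) \<longlongrightarrow>
            (1 / (phase k \<beta> sl - phase k \<beta> sj)) * mvec N (mmul N (Dmat S k \<beta> L) (cmat Wd)) f j)
           (at_right 0) \<and>
         ((\<lambda>\<epsilon>. fe \<epsilon> j / of_real \<epsilon>) \<longlongrightarrow>
            (1 / (phase k \<beta> sl - phase k \<beta> sj)) * mvec N (mmul N (Dmat S k \<beta> L) (cmat Wd)) f j)
           (at_right 0)"
proof -
  note eigen = assms(11) and lam = assms(12) and fe_lim = assms(13)
  note j = assms(16) assms(19) assms(18)
  have "sl \<noteq> sj"
    using assms(17,19) by blast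
  then have phases_differ: "phase k \<beta> sl \<noteq> phase k \<beta> sj"
    by (rule phase_neq_if_Gamma[OF assms(6,5,8,18)])
  have row: "\<forall>\<^sub>F \<epsilon> in at_right 0.
      phase k \<beta> sj * (fe \<epsilon> j + of_real \<epsilon> * mvec N (cmat Wd) (fe \<epsilon>) j) = lam \<epsilon> * fe \<epsilon> j"
    using eventually_at_right_real[OF \<open>0 < \<gamma>\<close>]
  proof eventually_elim
    case (elim \<epsilon>)
    then have "mvec N (Pmat N S k \<beta> L Wd \<epsilon>) (fe \<epsilon>) j = lam \<epsilon> * fe \<epsilon> j"
      using eigen j(1) by simp
    then show ?case by (simp only: mvec_Pmat[OF j])
  qed
  have "((\<lambda>\<epsilon>. mvec N (cmat Wd) (fe \<epsilon>) j) \<longlongrightarrow> mvec N (cmat Wd) f j) (at_right 0)"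
    using fe_lim by (intro tendsto_mvec) simp
  from perturbed_eigen_row_limit[OF row lam phases_differ this]
  have quotient: "((\<lambda>\<epsilon>. fe \<epsilon> j / of_real \<epsilon>) \<longlongrightarrow>
      (1 / (phase k \<beta> sl - phase k \<beta> sj)) * mvec N (mmul N (Dmat S k \<beta> L) (cmat Wd)) f j) (at_right 0)"
    by (simp add: mvec_Dmat_mmul[OF j])
  have "f j = 0"
    using tendsto_zero_if_tendsto_divide_ident[OF quotient] fe_lim j(1)
    by (auto intro: tendsto_unique[OF trivial_limit_at_right_real])
  with quotient show ?thesis by simp
qed

end
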